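(* Let $t>0$, let $X,Y\subset\mathbb{R}^D$ be finite sets and $Q=X\cap Y$. Then $X$ and $Y$ are magnitude-equivalent at scale $t$ if and only if $\mathbf{w}^t_X(z)=\mathbf{w}^t_Y(z)$ for all $z\in Q$, $\mathbf{w}^t_X(z)=0$ for all $z\in X\setminus Q$, and $\mathbf{w}^t_Y(z)=0$ for all $z\in Y\setminus Q$.
   Context: For a finite set $A\subset\mathbb{R}^D$ and $t>0$, the matrix $\zeta_{tA}(x,y)=\exp(-t\|x-y\|)$ ($x,y\in A$) is invertible and $\mathbf{w}^t_A=\zeta_{tA}^{-1}\mathbb{1}$ is the weighting vector of $A$ at scale $t$ (the unique vector with $\sum_{y\in A}\zeta_{tA}(x,y)\mathbf{w}^t_A(y)=1$ for all $x\in A$). Finite $X,Y\subset\mathbb{R}^D$ are magnitude-equivalent at scale $t$ if $\{x\in X:\mathbf{w}^t_X(x)\neq0\}=\{y\in Y:\mathbf{w}^t_Y(y)\neq0\}$. *)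

theory Defs
  imports "HOL-Analysis.Analysis"
begin

text \<open>Similarity kernel of the scaled set tA: zeta(x,y) = exp(-t * norm(x - y)).\<close>
definition zeta :: "real \<Rightarrow> real^'n \<Rightarrow> real^'n \<Rightarrow> real" where
  "zeta t x y = exp (- t * norm (x - y))"

definition weighting :: "real \<Rightarrow> (real^'n) set \<Rightarrow> real^'n \<Rightarrow> real" where
  "weighting t A = (THE w. (\<forall>x\<in>A. (\<Sum>y\<in>A. zeta t x y * w y) = 1) \<and> (\<forall>x. x \<notin> A \<longrightarrow> w x = 0))"

definition wsupp :: "real \<Rightarrow> (real^'n) set \<Rightarrow> (real^'n) set" where
  "wsupp t A = {x\<in>A. weighting t A x \<noteq> 0}"

definition magnitude_equivalent :: "real \<Rightarrow> (real^'n) set \<Rightarrow> (real^'n) set \<Rightarrow> bool" where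
  "magnitude_equivalent t X Y \<longleftrightarrow> wsupp t X = wsupp t Y"

end

theory Submission
  imports Defs
begin

text \<open>The kernel \<open>exp (- t \<parallel>x - y\<parallel>)\<close> is strictly positive definite on every finite set.
  Write it as \<open>e\<^sup>-\<^sup>t\<^sup>\<parallel>\<^sup>x\<^sup>\<parallel> e\<^sup>-\<^sup>t\<^sup>\<parallel>\<^sup>y\<^sup>\<parallel> exp (t (\<parallel>x\<parallel> + \<parallel>y\<parallel> - \<parallel>x - y\<parallel>))\<close>. The kernel
  \<open>\<parallel>x\<parallel> + \<parallel>y\<parallel> - \<parallel>x - y\<parallel>\<close> is positive semidefinite because the norm is conditionally negative
  definite, which follows from Gaussian kernels being positive semidefinite and
  \<open>r = const \<cdot> \<integral>\<^sub>0\<^sup>\<infinity> (1 - exp (- s r\<^sup>2)) s\<^sup>-\<^sup>3\<^sup>/\<^sup>2 ds\<close>; exponentials of positive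
  semidefinite kernels are positive semidefinite by the Schur product theorem. Strictness: if
  \<open>\<Sum> c\<^sub>x c\<^sub>y \<parallel>x - y\<parallel>\<close> vanished for some \<open>c \<noteq> 0\<close> with \<open>\<Sum> c\<^sub>x = 0\<close>, then
  \<open>y \<mapsto> \<Sum> c\<^sub>x \<parallel>x - y\<parallel>\<close> would be constant, which is impossible at the kink of a point with
  \<open>c\<^sub>x \<noteq> 0\<close>.

  Hence weightings exist and are unique. The weighting of \<open>A\<close> restricted to its support solves
  the weighting equations of the support, so it is the weighting of the support; sets with the
  same support therefore have the same weighting.\<close>

section \<open>Quadratic forms of kernels\<close>

definition quad_form :: "('a \<Rightarrow> 'a \<Rightarrow> real) \<Rightarrow> 'a set \<Rightarrow> ('a \<Rightarrow> real) \<Rightarrow> real" where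
  "quad_form K A c = (\<Sum>i\<in>A. \<Sum>j\<in>A. c i * c j * K i j)"

definition psd_kernel :: "('a \<Rightarrow> 'a \<Rightarrow> real) \<Rightarrow> 'a set \<Rightarrow> bool" where
  "psd_kernel K A \<longleftrightarrow> (\<forall>c. 0 \<le> quad_form K A c)"

definition pd_kernel :: "('a \<Rightarrow> 'a \<Rightarrow> real) \<Rightarrow> 'a set \<Rightarrow> bool" where
  "pd_kernel K A \<longleftrightarrow> (\<forall>c. (\<exists>x\<in>A. c x \<noteq> 0) \<longrightarrow> 0 < quad_form K A c)"

definition sym_kernel :: "('a \<Rightarrow> 'a \<Rightarrow> real) \<Rightarrow> 'a set \<Rightarrow> bool" where
  "sym_kernel K A \<longleftrightarrow> (\<forall>i\<in>A. \<forall>j\<in>A. K i j = K j i)"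

lemma sum_indicator_singleton_mult:
  fixes f :: "'a \<Rightarrow> real"
  assumes "finite A" "a \<in> A"
  shows "(\<Sum>j\<in>A. indicator {a} j * f j) = f a"
proof -
  have "(\<Sum>j\<in>A. indicator {a} j * f j) = (\<Sum>j\<in>A. if j = a then f j else 0)"
    by (rule sum.cong) (simp_all add: indicator_def)
  also have "\<dots> = f a" using assms by simp
  finally show ?thesis .
qed

lemma quad_form_cong:
  assumes "\<And>x. x \<in> A \<Longrightarrow> c x = d x"
  shows "quad_form K A c = quad_form K A d"
  unfolding quad_form_def using assms by (intro sum.cong refl) auto

lemma quad_form_mono_neutral:
  assumes "finite B" "A \<subseteq> B" "\<And>x. x \<in> B - A \<Longrightarrow> c x = 0"
  shows "quad_form K B c = quad_form K A c"
proof -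
  have "quad_form K B c = (\<Sum>i\<in>A. \<Sum>j\<in>B. c i * c j * K i j)"
    unfolding quad_form_def by (rule sum.mono_neutral_right) (use assms in auto)
  also have "\<dots> = (\<Sum>i\<in>A. \<Sum>j\<in>A. c i * c j * K i j)"
    by (intro sum.cong refl sum.mono_neutral_right) (use assms in auto)
  finally show ?thesis unfolding quad_form_def .
qed

lemma quad_form_zero_extend:
  assumes "finite B" "A \<subseteq> B"
  shows "quad_form K B (\<lambda>x. if x \<in> A then c x else 0) = quad_form K A c"
proof -
  have "quad_form K B (\<lambda>x. if x \<in> A then c x else 0)
      = quad_form K A (\<lambda>x. if x \<in> A then c x else 0)"
    by (rule quad_form_mono_neutral) (use assms in auto)
  also have "\<dots> = quad_form K A c" by (rule quad_form_cong) simp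
  finally show ?thesis .
qed

lemma quad_form_indicator:
  assumes "finite A" "a \<in> A"
  shows "quad_form K A (indicator {a}) = K a a"
proof -
  have "quad_form K A (indicator {a}) = (\<Sum>i\<in>A. indicator {a} i * (\<Sum>j\<in>A. indicator {a} j * K i j))"
    unfolding quad_form_def by (simp add: sum_distrib_left mult.assoc)
  then show ?thesis by (simp only: sum_indicator_singleton_mult[OF assms])
qed

lemma quad_form_add_indicator:
  assumes "finite A" "a \<in> A" "sym_kernel K A"
  shows "quad_form K A (\<lambda>i. c i + \<mu> * indicator {a} i)
           = quad_form K A c + 2 * \<mu> * (\<Sum>i\<in>A. c i * K i a) + \<mu>\<^sup>2 * K a a"
proof -
  let ?e = "indicator {a} :: _ \<Rightarrow> real"
  have "quad_form K A (\<lambda>i. c i + \<mu> * ?e i)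
      = (\<Sum>i\<in>A. \<Sum>j\<in>A. c i * c j * K i j + \<mu> * ?e i * (c j * K i j)
                         + \<mu> * ?e j * (c i * K i j) + \<mu>\<^sup>2 * (?e i * ?e j * K i j))"
    unfolding quad_form_def by (intro sum.cong refl) (simp add: algebra_simps power2_eq_square)
  also have "\<dots> = quad_form K A c + \<mu> * (\<Sum>i\<in>A. ?e i * (\<Sum>j\<in>A. c j * K i j))
      + \<mu> * (\<Sum>i\<in>A. \<Sum>j\<in>A. ?e j * (c i * K i j)) + \<mu>\<^sup>2 * quad_form K A ?e"
    unfolding quad_form_def by (simp add: sum.distrib sum_distrib_left mult.assoc)
  also have "(\<Sum>i\<in>A. ?e i * (\<Sum>j\<in>A. c j * K i j)) = (\<Sum>j\<in>A. c j * K a j)"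
    by (simp only: sum_indicator_singleton_mult[OF assms(1,2)])
  also have "\<dots> = (\<Sum>i\<in>A. c i * K i a)"
    using assms unfolding sym_kernel_def by (intro sum.cong) auto
  also have "(\<Sum>i\<in>A. \<Sum>j\<in>A. ?e j * (c i * K i j)) = (\<Sum>i\<in>A. c i * K i a)"
    by (intro sum.cong refl) (rule sum_indicator_singleton_mult[OF assms(1,2)])
  finally show ?thesis using quad_form_indicator[OF assms(1,2)] by simp
qed

lemma psd_kernel_subset:
  assumes "finite B" "A \<subseteq> B" "psd_kernel K B"
  shows "psd_kernel K A"
  unfolding psd_kernel_def
proof
  fix c
  have "0 \<le> quad_form K B (\<lambda>x. if x \<in> A then c x else 0)"
    using assms(3) by (simp add: psd_kernel_def)
  then show "0 \<le> quad_form K A c" using quad_form_zero_extend[OF assms(1,2)] by simp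
qed

lemma pd_kernel_subset:
  assumes "finite B" "A \<subseteq> B" "pd_kernel K B"
  shows "pd_kernel K A"
  unfolding pd_kernel_def
proof (intro allI impI)
  fix c :: "_ \<Rightarrow> real"
  assume "\<exists>x\<in>A. c x \<noteq> 0"
  then have "\<exists>x\<in>B. (if x \<in> A then c x else 0) \<noteq> 0" using assms(2) by auto
  then have "0 < quad_form K B (\<lambda>x. if x \<in> A then c x else 0)"
    using assms(3) by (simp add: pd_kernel_def)
  then show "0 < quad_form K A c" using quad_form_zero_extend[OF assms(1,2)] by simp
qed

lemma psd_kernel_diag:
  assumes "finite A" "a \<in> A" "psd_kernel K A"
  shows "0 \<le> K a a"
proof -
  have "0 \<le> quad_form K A (indicator {a})" using assms(3) by (simp add: psd_kernel_def)
  then show ?thesis using quad_form_indicator[OF assms(1,2)] by simp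
qed

lemma nonneg_quadratic_linear_coeff_eq_0:
  fixes a b :: real
  assumes "\<And>\<mu>. 0 \<le> 2 * \<mu> * b + \<mu>\<^sup>2 * a"
  shows "b = 0"
proof (rule ccontr)
  assume "b \<noteq> 0"
  then have bb: "0 < b * b" by (simp flip: power2_eq_square)
  show False
  proof (cases "a \<le> 0")
    case True
    have "0 \<le> 2 * (- b) * b + (- b)\<^sup>2 * a" by (rule assms)
    moreover have "(- b)\<^sup>2 * a \<le> 0" using True by (simp add: mult_nonneg_nonpos)
    ultimately show False using bb by simp
  next
    case False
    have "0 \<le> 2 * (- b / a) * b + (- b / a)\<^sup>2 * a" by (rule assms)
    also have "\<dots> = - (b * b) / a" using False by (simp add: field_simps power2_eq_square)
    finally show False using bb False by (simp add: divide_nonpos_pos field_simps)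
  qed
qed

lemma psd_kernel_isotropic_imp_null:
  assumes "finite A" "psd_kernel K A" "sym_kernel K A" "a \<in> A" "quad_form K A c = 0"
  shows "(\<Sum>i\<in>A. c i * K i a) = 0"
proof (rule nonneg_quadratic_linear_coeff_eq_0)
  fix \<mu> :: real
  have "0 \<le> quad_form K A (\<lambda>i. c i + \<mu> * indicator {a} i)"
    using assms(2) unfolding psd_kernel_def by blast
  then show "0 \<le> 2 * \<mu> * (\<Sum>i\<in>A. c i * K i a) + \<mu>\<^sup>2 * K a a"
    using quad_form_add_indicator[OF assms(1,4,3)] assms(5) by simp
qed

section \<open>Gram factorisation and the Schur product theorem\<close>

text \<open>One step of Cholesky elimination: subtracting the outer product of this column from \<open>K\<close>
  clears row and column \<open>a\<close> while keeping \<open>K\<close> positive semidefinite.\<close>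

definition pivot_column :: "('a \<Rightarrow> 'a \<Rightarrow> real) \<Rightarrow> 'a \<Rightarrow> 'a \<Rightarrow> real" where
  "pivot_column K a i = (if K a a = 0 then 0 else K i a / sqrt (K a a))"

lemma pivot_column_outer:
  assumes "finite A" "psd_kernel K A" "sym_kernel K A" "a \<in> A" "j \<in> A"
  shows "K j a = pivot_column K a j * pivot_column K a a"
proof (cases "K a a = 0")
  case True
  have "quad_form K A (indicator {a}) = 0" using quad_form_indicator[OF assms(1,4)] True by simp
  from psd_kernel_isotropic_imp_null[OF assms(1-3,5) this]
  have "K a j = 0" unfolding sum_indicator_singleton_mult[OF assms(1,4)] .
  then show ?thesis using True assms unfolding sym_kernel_def pivot_column_def by simp
next
  case False
  then have "0 < K a a" using psd_kernel_diag[OF assms(1,4,2)] by simp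
  then show ?thesis
    by (simp add: pivot_column_def real_sqrt_mult[symmetric] power2_eq_square[symmetric])
qed

lemma psd_kernel_minus_pivot:
  assumes "finite A" "psd_kernel K A" "sym_kernel K A" "a \<in> A"
  shows "psd_kernel (\<lambda>i j. K i j - pivot_column K a i * pivot_column K a j) A"
  unfolding psd_kernel_def
proof
  fix c
  let ?v = "pivot_column K a"
  define b where "b = (\<Sum>i\<in>A. c i * K i a)"
  have "quad_form (\<lambda>i j. K i j - ?v i * ?v j) A c
      = quad_form K A c - (\<Sum>i\<in>A. \<Sum>j\<in>A. (c i * ?v i) * (c j * ?v j))"
    unfolding quad_form_def by (simp add: algebra_simps sum_subtractf)
  also have "(\<Sum>i\<in>A. \<Sum>j\<in>A. (c i * ?v i) * (c j * ?v j)) = (\<Sum>i\<in>A. c i * ?v i)\<^sup>2"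
    by (simp add: power2_eq_square sum_product)
  finally have form: "quad_form (\<lambda>i j. K i j - ?v i * ?v j) A c
      = quad_form K A c - (\<Sum>i\<in>A. c i * ?v i)\<^sup>2" .
  show "0 \<le> quad_form (\<lambda>i j. K i j - ?v i * ?v j) A c"
  proof (cases "K a a = 0")
    case True
    then show ?thesis using form assms(2) unfolding psd_kernel_def pivot_column_def by simp
  next
    case False
    then have pos: "0 < K a a" using psd_kernel_diag[OF assms(1,4,2)] by simp
    have "0 \<le> quad_form K A (\<lambda>i. c i + (- b / K a a) * indicator {a} i)"
      using assms(2) unfolding psd_kernel_def by blast
    also have "\<dots> = quad_form K A c - b\<^sup>2 / K a a"
      using quad_form_add_indicator[OF assms(1,4,3), of c "- b / K a a"] pos unfolding b_def
      by (simp add: field_simps power2_eq_square)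
    also have "b\<^sup>2 / K a a = (\<Sum>i\<in>A. c i * ?v i)\<^sup>2"
      using pos by (simp add: b_def pivot_column_def sum_divide_distrib[symmetric] power_divide)
    finally show ?thesis using form by simp
  qed
qed

lemma psd_kernel_gram:
  assumes "finite A" "psd_kernel K A" "sym_kernel K A"
  shows "\<exists>(m::nat) F. \<forall>i\<in>A. \<forall>j\<in>A. K i j = (\<Sum>p<m. F p i * F p j)"
  using assms
proof (induction A arbitrary: K rule: finite_induct)
  case empty
  then show ?case by auto
next
  case (insert a A)
  let ?B = "insert a A"
  define v where "v = pivot_column K a"
  define K' where "K' i j = K i j - v i * v j" for i j
  have fin: "finite ?B" using insert.hyps by simp
  have sym: "K i j = K j i" if "i \<in> ?B" "j \<in> ?B" for i j
    using insert.prems(2) that unfolding sym_kernel_def by blast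
  have col: "K i a = v i * v a" if "i \<in> ?B" for i
    using pivot_column_outer[OF fin insert.prems insertI1 that] unfolding v_def .
  have K'_row: "K' i j = 0" if "i \<in> ?B" "j \<in> ?B" "i = a \<or> j = a" for i j
    using col[OF that(1)] col[OF that(2)] sym[OF that(1,2)] that(3)
    unfolding K'_def by (auto simp: mult.commute)
  have "psd_kernel K' ?B"
    using psd_kernel_minus_pivot[OF fin insert.prems insertI1] unfolding K'_def v_def .
  then have "psd_kernel K' A" by (rule psd_kernel_subset[OF fin, rotated]) auto
  moreover have "sym_kernel K' A" using sym unfolding sym_kernel_def K'_def by auto
  ultimately obtain m :: nat and F where F: "\<forall>i\<in>A. \<forall>j\<in>A. K' i j = (\<Sum>p<m. F p i * F p j)"
    using insert.IH by blast
  define G where "G p i = (if p < m then (if i = a then 0 else F p i) else v i)" for p i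
  show ?case
  proof (intro exI[of _ "Suc m"] exI[of _ G] ballI)
    fix i j assume ij: "i \<in> ?B" "j \<in> ?B"
    have "(\<Sum>p<Suc m. G p i * G p j) = (\<Sum>p<m. G p i * G p j) + v i * v j"
      by (simp add: G_def[of m])
    also have "(\<Sum>p<m. G p i * G p j) = (\<Sum>p<m. if i = a \<or> j = a then 0 else F p i * F p j)"
      by (intro sum.cong refl) (auto simp: G_def)
    also have "\<dots> = K' i j"
    proof (cases "i = a \<or> j = a")
      case True
      then show ?thesis using K'_row[OF ij] by simp
    next
      case False
      then show ?thesis using F ij by simp
    qed
    finally show "K i j = (\<Sum>p<Suc m. G p i * G p j)"
      by (simp add: K'_def)
  qed
qed

lemma psd_kernel_mult_gram:
  assumes "psd_kernel K A" "\<And>i j. i \<in> A \<Longrightarrow> j \<in> A \<Longrightarrow> L i j = (\<Sum>p\<in>P. F p i * F p j)"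
  shows "psd_kernel (\<lambda>i j. K i j * L i j) A"
  unfolding psd_kernel_def
proof
  fix c
  have "quad_form (\<lambda>i j. K i j * L i j) A c
      = (\<Sum>i\<in>A. \<Sum>j\<in>A. \<Sum>p\<in>P. (c i * F p i) * (c j * F p j) * K i j)"
    unfolding quad_form_def using assms(2)
    by (intro sum.cong refl) (simp add: sum_distrib_left sum_distrib_right algebra_simps)
  also have "\<dots> = (\<Sum>p\<in>P. quad_form K A (\<lambda>i. c i * F p i))"
    unfolding quad_form_def by (simp only: sum.swap[of _ P])
  also have "\<dots> \<ge> 0" using assms(1) unfolding psd_kernel_def by (simp add: sum_nonneg)
  finally show "0 \<le> quad_form (\<lambda>i j. K i j * L i j) A c" .
qed

lemma psd_kernel_power:
  assumes "finite A" "psd_kernel K A" "sym_kernel K A"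
  shows "psd_kernel (\<lambda>i j. K i j ^ k) A"
proof (induction k)
  case 0
  have "quad_form (\<lambda>i j. K i j ^ 0) A c = (\<Sum>i\<in>A. c i)\<^sup>2" for c
    unfolding quad_form_def by (simp add: power2_eq_square sum_product)
  then show ?case unfolding psd_kernel_def by simp
next
  case (Suc k)
  obtain m :: nat and F where "\<forall>i\<in>A. \<forall>j\<in>A. K i j = (\<Sum>p<m. F p i * F p j)"
    using psd_kernel_gram[OF assms] by blast
  from psd_kernel_mult_gram[OF Suc this[rule_format]] show ?case by (simp add: mult.commute)
qed

text \<open>The exponential series of a positive semidefinite kernel has nonnegative terms
  (by the Schur product theorem); keeping only the first two gives the bound.\<close>

lemma quad_form_exp_kernel_ge:
  assumes "finite A" "psd_kernel K A" "sym_kernel K A"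
  shows "(\<Sum>i\<in>A. c i)\<^sup>2 + quad_form K A c \<le> quad_form (\<lambda>i j. exp (K i j)) A c"
proof -
  define T where "T k = quad_form (\<lambda>i j. K i j ^ k) A c / fact k" for k
  have "(\<lambda>k. \<Sum>i\<in>A. \<Sum>j\<in>A. c i * c j * (K i j ^ k / fact k)) sums quad_form (\<lambda>i j. exp (K i j)) A c"
    unfolding quad_form_def
  proof (intro sums_sum sums_mult)
    fix i j
    show "(\<lambda>n. K i j ^ n / fact n) sums exp (K i j)"
      using exp_converges[of "K i j"] by (simp add: divide_inverse mult.commute scaleR_conv_of_real)
  qed
  then have T: "T sums quad_form (\<lambda>i j. exp (K i j)) A c"
    unfolding T_def quad_form_def by (simp add: sum_divide_distrib)
  have "0 \<le> T k" for k
    using psd_kernel_power[OF assms, of k] unfolding T_def psd_kernel_def by simp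
  then have "(\<Sum>k<2. T k) \<le> quad_form (\<lambda>i j. exp (K i j)) A c"
    using sum_le_suminf[OF sums_summable[OF T], of "{..<2}"] sums_unique[OF T] by simp
  moreover have "(\<Sum>k<2. T k) = (\<Sum>i\<in>A. c i)\<^sup>2 + quad_form K A c"
    unfolding T_def quad_form_def by (simp add: numeral_2_eq_2 power2_eq_square sum_product)
  ultimately show ?thesis by simp
qed

section \<open>Linear systems with positive definite kernels\<close>

definition kernel_solution :: "('a \<Rightarrow> 'a \<Rightarrow> real) \<Rightarrow> 'a set \<Rightarrow> ('a \<Rightarrow> real) \<Rightarrow> ('a \<Rightarrow> real) \<Rightarrow> bool" where
  "kernel_solution K A b w \<longleftrightarrow> (\<forall>x\<in>A. (\<Sum>y\<in>A. K x y * w y) = b x) \<and> (\<forall>x. x \<notin> A \<longrightarrow> w x = 0)"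

lemma pd_kernel_schur_complement_pos:
  assumes "finite A" "a \<notin> A" "sym_kernel K (insert a A)" "pd_kernel K (insert a A)"
    and "kernel_solution K A (\<lambda>x. K x a) v"
  shows "0 < K a a - (\<Sum>y\<in>A. K a y * v y)"
proof -
  let ?B = "insert a A"
  define c where "c = (\<lambda>i. - v i + 1 * indicator {a} i)"
  have fin: "finite ?B" using assms(1) by simp
  have v: "\<And>x. x \<in> A \<Longrightarrow> (\<Sum>y\<in>A. K x y * v y) = K x a" "\<And>x. x \<notin> A \<Longrightarrow> v x = 0"
    using assms(5) unfolding kernel_solution_def by auto
  have "c a \<noteq> 0" using v(2) assms(2) by (simp add: c_def)
  then have "0 < quad_form K ?B c" using assms(4) unfolding pd_kernel_def by blast
  also have "quad_form K ?B c
      = quad_form K ?B (\<lambda>i. - v i) + 2 * (\<Sum>i\<in>?B. - v i * K i a) + K a a"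
    using quad_form_add_indicator[OF fin insertI1 assms(3), of "\<lambda>i. - v i" 1]
    by (simp add: c_def)
  also have "quad_form K ?B (\<lambda>i. - v i) = quad_form K A (\<lambda>i. - v i)"
    by (rule quad_form_mono_neutral) (use fin v in auto)
  also have "\<dots> = (\<Sum>i\<in>A. v i * (\<Sum>j\<in>A. K i j * v j))"
    unfolding quad_form_def by (simp add: sum_distrib_left algebra_simps)
  also have "\<dots> = (\<Sum>i\<in>A. v i * K i a)" using v(1) by simp
  also have "(\<Sum>i\<in>?B. - v i * K i a) = - (\<Sum>i\<in>A. v i * K i a)"
    using assms(1,2) v(2) by (simp add: sum_negf)
  also have "(\<Sum>i\<in>A. v i * K i a) = (\<Sum>y\<in>A. K a y * v y)"
  proof (rule sum.cong[OF refl])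
    fix i assume "i \<in> A"
    then have "K i a = K a i" using assms(3) unfolding sym_kernel_def by blast
    then show "v i * K i a = K a i * v i" by simp
  qed
  finally show ?thesis by simp
qed

lemma kernel_solution_insert:
  assumes "finite A" "a \<notin> A"
    and u: "kernel_solution K A b u" and v: "kernel_solution K A (\<lambda>x. K x a) v"
    and D: "K a a - (\<Sum>y\<in>A. K a y * v y) \<noteq> 0"
  defines "\<alpha> \<equiv> (b a - (\<Sum>y\<in>A. K a y * u y)) / (K a a - (\<Sum>y\<in>A. K a y * v y))"
  shows "kernel_solution K (insert a A) b (\<lambda>x. if x = a then \<alpha> else u x - \<alpha> * v x)"
  unfolding kernel_solution_def
proof (intro conjI allI impI ballI)
  let ?w = "\<lambda>x. if x = a then \<alpha> else u x - \<alpha> * v x"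
  have sum_w: "(\<Sum>y\<in>insert a A. K x y * ?w y)
      = K x a * \<alpha> + (\<Sum>y\<in>A. K x y * u y) - \<alpha> * (\<Sum>y\<in>A. K x y * v y)" for x
  proof -
    have "(\<Sum>y\<in>A. K x y * ?w y) = (\<Sum>y\<in>A. K x y * u y - \<alpha> * (K x y * v y))"
      using assms(2) by (intro sum.cong refl) (auto simp: algebra_simps)
    then show ?thesis using assms(1,2) by (simp add: sum_subtractf sum_distrib_left)
  qed
  fix x assume "x \<in> insert a A"
  then consider "x = a" | "x \<in> A" by blast
  then show "(\<Sum>y\<in>insert a A. K x y * ?w y) = b x"
  proof cases
    case 1
    have "(\<Sum>y\<in>insert a A. K x y * ?w y)
        = \<alpha> * (K a a - (\<Sum>y\<in>A. K a y * v y)) + (\<Sum>y\<in>A. K a y * u y)"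
      unfolding sum_w 1 by (simp add: algebra_simps)
    also have "\<dots> = b a" unfolding \<alpha>_def using D by simp
    finally show ?thesis using 1 by simp
  next
    case 2
    then show ?thesis using u v unfolding sum_w kernel_solution_def by (simp add: mult.commute)
  qed
next
  fix x assume "x \<notin> insert a A"
  then show "(if x = a then \<alpha> else u x - \<alpha> * v x) = 0"
    using u v unfolding kernel_solution_def by simp
qed

lemma pd_kernel_solvable:
  assumes "finite A" "sym_kernel K A" "pd_kernel K A"
  shows "\<exists>w. kernel_solution K A b w"
  using assms
proof (induction A arbitrary: b rule: finite_induct)
  case empty
  show ?case by (rule exI[of _ "\<lambda>_. 0"]) (simp add: kernel_solution_def)
next
  case (insert a A b)
  have "sym_kernel K A" using insert.prems(1) unfolding sym_kernel_def by auto
  moreover have "pd_kernel K A" using pd_kernel_subset[OF _ _ insert.prems(2)] insert.hyps by blast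
  ultimately have IH: "\<exists>w. kernel_solution K A b' w" for b' using insert.IH by blast
  obtain u where u: "kernel_solution K A b u" using IH by blast
  obtain v where v: "kernel_solution K A (\<lambda>x. K x a) v" using IH by blast
  have "0 < K a a - (\<Sum>y\<in>A. K a y * v y)"
    by (rule pd_kernel_schur_complement_pos[OF insert.hyps insert.prems v])
  then have "K a a - (\<Sum>y\<in>A. K a y * v y) \<noteq> 0" by simp
  from kernel_solution_insert[OF insert.hyps u v this] show ?case by blast
qed

lemma pd_kernel_solution_unique:
  assumes "finite A" "pd_kernel K A" "kernel_solution K A b w1" "kernel_solution K A b w2"
  shows "w1 = w2"
proof -
  define c where "c x = w1 x - w2 x" for x
  have "(\<Sum>y\<in>A. K x y * c y) = 0" if "x \<in> A" for x
    using assms(3,4) that unfolding c_def kernel_solution_def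
    by (simp add: right_diff_distrib sum_subtractf)
  moreover have "quad_form K A c = (\<Sum>x\<in>A. c x * (\<Sum>y\<in>A. K x y * c y))"
    unfolding quad_form_def by (simp add: sum_distrib_left algebra_simps)
  ultimately have "quad_form K A c = 0" by simp
  then have "\<forall>x\<in>A. c x = 0" using assms(2) unfolding pd_kernel_def by (metis less_irrefl)
  moreover have "\<forall>x. x \<notin> A \<longrightarrow> c x = 0" using assms(3,4) unfolding c_def kernel_solution_def by simp
  ultimately show ?thesis unfolding c_def by (metis eq_iff_diff_eq_0 ext)
qed

lemma pd_kernel_ex1_solution:
  assumes "finite A" "sym_kernel K A" "pd_kernel K A"
  shows "\<exists>!w. kernel_solution K A b w"
proof -
  obtain w where w: "kernel_solution K A b w" using pd_kernel_solvable[OF assms] by blast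
  have "w' = w" if "kernel_solution K A b w'" for w'
    using that w by (rule pd_kernel_solution_unique[OF assms(1,3)])
  with w show ?thesis by blast
qed

section \<open>Conditional negative definiteness of the norm\<close>

text \<open>For \<open>r \<ge> 0\<close>, \<open>r\<close> is a constant multiple of \<open>\<integral>\<^sub>0\<^sup>\<infinity> (1 - exp (- s r\<^sup>2)) s\<^sup>-\<^sup>3\<^sup>/\<^sup>2 ds\<close>
  (substitute \<open>s \<mapsto> s / r\<^sup>2\<close>); this writes the norm as a mixture of the kernels
  \<open>1 - exp (- s \<parallel>x - y\<parallel>\<^sup>2)\<close>.\<close>

definition norm_integrand :: "real \<Rightarrow> real \<Rightarrow> real" where
  "norm_integrand r s = (if s > 0 then (1 - exp (- (s * r\<^sup>2))) * s powr (-3/2) else 0)"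

definition norm_integrand_majorant :: "real \<Rightarrow> real" where
  "norm_integrand_majorant s =
     (if s \<in> {0..1} then s powr (-1/2) else 0) + (if s \<in> {1..} then s powr (-3/2) else 0)"

definition norm_integral_const :: real where
  "norm_integral_const = integral\<^sup>L lborel (norm_integrand 1)"

lemma norm_integrand_measurable [measurable]: "norm_integrand r \<in> borel_measurable borel"
  unfolding norm_integrand_def by measurable

lemma norm_integrand_majorant_measurable [measurable]:
  "norm_integrand_majorant \<in> borel_measurable borel"
  unfolding norm_integrand_majorant_def by measurable

lemma norm_integrand_nonneg: "0 \<le> norm_integrand r s"
  unfolding norm_integrand_def by auto

lemma norm_integrand_majorant_nonneg: "0 \<le> norm_integrand_majorant s"
  unfolding norm_integrand_majorant_def by auto

lemma norm_integrand_le_majorant: "norm_integrand 1 s \<le> norm_integrand_majorant s"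
proof (cases "s > 0")
  case False
  then show ?thesis unfolding norm_integrand_def using norm_integrand_majorant_nonneg by simp
next
  case True
  then have eq: "norm_integrand 1 s = (1 - exp (- s)) * s powr (-3/2)"
    by (simp add: norm_integrand_def)
  show ?thesis
  proof (cases "s \<le> 1")
    case True
    have "1 - exp (- s) \<le> s" using exp_ge_add_one_self[of "-s"] by simp
    then have "norm_integrand 1 s \<le> s * s powr (-3/2)" unfolding eq by (intro mult_right_mono) auto
    also have "s * s powr (-3/2) = s powr (-1/2)" using \<open>s > 0\<close> by (simp add: powr_mult_base)
    also have "\<dots> \<le> norm_integrand_majorant s"
      unfolding norm_integrand_majorant_def using True \<open>s > 0\<close> by auto
    finally show ?thesis .
  next
    case False
    have "norm_integrand 1 s \<le> 1 * s powr (-3/2)" unfolding eq by (intro mult_right_mono) auto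
    also have "\<dots> \<le> norm_integrand_majorant s" unfolding norm_integrand_majorant_def using False by auto
    finally show ?thesis .
  qed
qed

lemma integrable_norm_integrand_majorant: "integrable lborel norm_integrand_majorant"
proof -
  have "((\<lambda>s. s powr (-1/2)) has_integral 2) {0..1::real}"
    using has_integral_powr_from_0[of "-1/2" 1] by simp
  then have I1: "((\<lambda>s. if s \<in> {0..1::real} then s powr (-1/2) else 0) has_integral 2) UNIV"
    unfolding has_integral_restrict_UNIV .
  have "((\<lambda>s. s powr (-3/2)) has_integral 2) {1::real..}"
    using has_integral_powr_to_inf[of "-3/2" 1] by simp
  then have I2: "((\<lambda>s. if s \<in> {1::real..} then s powr (-3/2) else 0) has_integral 2) UNIV"
    unfolding has_integral_restrict_UNIV .
  have "(norm_integrand_majorant has_integral (2 + 2)) UNIV"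
    unfolding norm_integrand_majorant_def by (intro has_integral_add I1 I2)
  then have "integral\<^sup>N lborel norm_integrand_majorant = 4"
    using nn_integral_has_integral_lborel[OF norm_integrand_majorant_measurable
        norm_integrand_majorant_nonneg] by simp
  then show ?thesis
    unfolding integrable_iff_bounded using norm_integrand_majorant_nonneg
    by (simp add: ennreal_less_top)
qed

lemma integrable_norm_integrand: "integrable lborel (norm_integrand 1)"
  by (rule Bochner_Integration.integrable_bound[OF integrable_norm_integrand_majorant])
     (use norm_integrand_nonneg in \<open>auto intro!: AE_I2 order.trans[OF norm_integrand_le_majorant]\<close>)

lemma norm_integrand_scale:
  assumes "r > 0"
  shows "norm_integrand r s = r ^ 3 * norm_integrand 1 (r\<^sup>2 * s)"
proof (cases "s > 0")
  case False
  then have "\<not> 0 < r\<^sup>2 * s" using assms by (simp add: zero_less_mult_iff)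
  then show ?thesis using False by (simp add: norm_integrand_def)
next
  case True
  have "(r\<^sup>2) powr (-3/2) = r powr (2 * (-3/2))"
    using assms by (simp add: powr_powr flip: powr_numeral)
  also have "\<dots> = 1 / r ^ 3" using assms by (simp add: powr_minus_divide powr_numeral)
  finally have "(r\<^sup>2 * s) powr (-3/2) = 1 / r ^ 3 * s powr (-3/2)"
    using True assms by (simp add: powr_mult)
  moreover have "0 < r\<^sup>2 * s" using True assms by simp
  ultimately show ?thesis using True assms by (simp add: norm_integrand_def mult.commute)
qed

lemma has_bochner_integral_norm_integrand:
  assumes "r \<ge> 0"
  shows "has_bochner_integral lborel (norm_integrand r) (r * norm_integral_const)"
proof (cases "r = 0")
  case True
  then have "norm_integrand r = (\<lambda>_. 0)" by (auto simp: norm_integrand_def)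
  then show ?thesis using True by (simp add: has_bochner_integral_zero)
next
  case False
  then have r: "r > 0" using assms by simp
  have c: "r\<^sup>2 \<noteq> 0" using r by simp
  have eq: "norm_integrand r = (\<lambda>x. r ^ 3 * norm_integrand 1 (0 + r\<^sup>2 * x))"
    using norm_integrand_scale[OF r] by auto
  have "integrable lborel (\<lambda>x. norm_integrand 1 (0 + r\<^sup>2 * x))"
    by (rule lborel_integrable_real_affine[OF integrable_norm_integrand c])
  then have "integrable lborel (norm_integrand r)" unfolding eq by simp
  moreover have "integral\<^sup>L lborel (norm_integrand r) = r * norm_integral_const"
    unfolding eq norm_integral_const_def
    using lborel_integral_real_affine[OF c, of "norm_integrand 1" 0] r
    by (simp add: power2_eq_square power3_eq_cube)
  ultimately show ?thesis by (simp add: has_bochner_integral_iff)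
qed

lemma norm_integral_const_pos: "0 < norm_integral_const"
proof -
  define m where "m = (1 - exp (-1)) * 2 powr (-3/2::real)"
  have "m * indicator {1..2::real} s \<le> norm_integrand 1 s" for s
  proof (cases "s \<in> {1..2}")
    case True
    have "m \<le> (1 - exp (- s)) * s powr (-3/2)"
      unfolding m_def using True by (intro mult_mono powr_mono2') auto
    then show ?thesis using True by (simp add: norm_integrand_def)
  qed (simp add: norm_integrand_nonneg)
  then have "integral\<^sup>L lborel (\<lambda>s. m * indicator {1..2::real} s) \<le> norm_integral_const"
    unfolding norm_integral_const_def by (intro integral_mono integrable_norm_integrand) auto
  moreover have "integral\<^sup>L lborel (\<lambda>s. m * indicator {1..2::real} s) = m" by simp
  moreover have "0 < m" unfolding m_def by simp
  ultimately show ?thesis by simp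
qed

lemma psd_kernel_gaussian:
  fixes A :: "'a::real_inner set"
  assumes "finite A" "s \<ge> 0"
  shows "psd_kernel (\<lambda>x y. exp (- (s * (norm (x - y))\<^sup>2))) A"
  unfolding psd_kernel_def
proof
  fix c :: "'a \<Rightarrow> real"
  define L where "L x y = 2 * s * (x \<bullet> y)" for x y :: 'a
  define a where "a x = c x * exp (- (s * (norm x)\<^sup>2))" for x
  have "quad_form L A d = 2 * s * (norm (\<Sum>x\<in>A. d x *\<^sub>R x))\<^sup>2" for d
  proof -
    have "(norm (\<Sum>x\<in>A. d x *\<^sub>R x))\<^sup>2 = (\<Sum>x\<in>A. d x *\<^sub>R x) \<bullet> (\<Sum>y\<in>A. d y *\<^sub>R y)"
      by (simp add: power2_norm_eq_inner)
    also have "\<dots> = (\<Sum>x\<in>A. \<Sum>y\<in>A. (d x *\<^sub>R x) \<bullet> (d y *\<^sub>R y))"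
      by (rule trans[OF inner_sum_left], rule sum.cong[OF refl], rule inner_sum_right)
    also have "\<dots> = (\<Sum>x\<in>A. \<Sum>y\<in>A. d x * d y * (x \<bullet> y))"
      by (simp add: mult.assoc mult.left_commute)
    finally show ?thesis
      by (simp add: quad_form_def L_def sum_distrib_left algebra_simps)
  qed
  then have L: "psd_kernel L A" unfolding psd_kernel_def using assms(2) by simp
  have "sym_kernel L A" unfolding sym_kernel_def L_def by (simp add: inner_commute)
  have split: "exp (- (s * (norm (x - y))\<^sup>2))
      = exp (- (s * (norm x)\<^sup>2)) * exp (- (s * (norm y)\<^sup>2)) * exp (L x y)" for x y
  proof -
    have polar: "(norm (x - y))\<^sup>2 = (norm x)\<^sup>2 + (norm y)\<^sup>2 - 2 * (x \<bullet> y)"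
      by (simp add: power2_norm_eq_inner inner_diff inner_commute)
    have "- (s * (norm (x - y))\<^sup>2) = - (s * (norm x)\<^sup>2) + - (s * (norm y)\<^sup>2) + L x y"
      unfolding L_def polar by (simp add: algebra_simps)
    then show ?thesis by (simp only: exp_add)
  qed
  have "quad_form (\<lambda>x y. exp (- (s * (norm (x - y))\<^sup>2))) A c = quad_form (\<lambda>x y. exp (L x y)) A a"
    unfolding quad_form_def a_def split by (intro sum.cong refl) (simp add: algebra_simps)
  also have "\<dots> \<ge> (\<Sum>i\<in>A. a i)\<^sup>2 + quad_form L A a"
    by (rule quad_form_exp_kernel_ge[OF assms(1) L \<open>sym_kernel L A\<close>])
  finally show "0 \<le> quad_form (\<lambda>x y. exp (- (s * (norm (x - y))\<^sup>2))) A c"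
    using L unfolding psd_kernel_def by (smt (verit) zero_le_power2)
qed

lemma norm_cond_neg_def:
  fixes A :: "'a::real_inner set"
  assumes "finite A" "(\<Sum>x\<in>A. c x) = 0"
  shows "quad_form (\<lambda>x y. norm (x - y)) A c \<le> 0"
proof -
  define F where "F s = (\<Sum>x\<in>A. \<Sum>y\<in>A. c x * c y * norm_integrand (norm (x - y)) s)" for s
  have F: "has_bochner_integral lborel F (norm_integral_const * quad_form (\<lambda>x y. norm (x - y)) A c)"
  proof -
    have "has_bochner_integral lborel F
        (\<Sum>x\<in>A. \<Sum>y\<in>A. c x * c y * (norm (x - y) * norm_integral_const))"
      unfolding F_def
      by (intro has_bochner_integral_sum has_bochner_integral_mult_right
          has_bochner_integral_norm_integrand) auto
    then show ?thesis by (simp add: quad_form_def sum_distrib_left algebra_simps)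
  qed
  have F_nonpos: "F s \<le> 0" for s
  proof (cases "s > 0")
    case True
    have "F s = s powr (-3/2) * (\<Sum>x\<in>A. \<Sum>y\<in>A. c x * c y * (1 - exp (- (s * (norm (x - y))\<^sup>2))))"
      unfolding F_def norm_integrand_def using True by (simp add: sum_distrib_left algebra_simps)
    also have "(\<Sum>x\<in>A. \<Sum>y\<in>A. c x * c y * (1 - exp (- (s * (norm (x - y))\<^sup>2))))
        = (\<Sum>x\<in>A. c x)\<^sup>2 - quad_form (\<lambda>x y. exp (- (s * (norm (x - y))\<^sup>2))) A c"
      unfolding quad_form_def
      by (simp add: power2_eq_square sum_product right_diff_distrib sum_subtractf)
    finally have "F s = s powr (-3/2) *
        ((\<Sum>x\<in>A. c x)\<^sup>2 - quad_form (\<lambda>x y. exp (- (s * (norm (x - y))\<^sup>2))) A c)" .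
    moreover have "0 \<le> quad_form (\<lambda>x y. exp (- (s * (norm (x - y))\<^sup>2))) A c"
      using psd_kernel_gaussian[OF assms(1), of s] True unfolding psd_kernel_def by simp
    ultimately show ?thesis using assms(2) by (simp add: mult_nonneg_nonpos)
  qed (simp add: F_def norm_integrand_def)
  have "0 \<le> integral\<^sup>L lborel (\<lambda>s. - F s)"
    by (rule Bochner_Integration.integral_nonneg) (simp add: F_nonpos)
  also have "\<dots> = - (norm_integral_const * quad_form (\<lambda>x y. norm (x - y)) A c)"
    using F by (simp add: has_bochner_integral_iff)
  finally show ?thesis using norm_integral_const_pos by (simp add: mult_le_0_iff)
qed

section \<open>Strict positive definiteness of the exponential kernel\<close>

definition gromov_kernel :: "'a::real_normed_vector \<Rightarrow> 'a \<Rightarrow> real" where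
  "gromov_kernel x y = norm x + norm y - norm (x - y)"

lemma sym_kernel_gromov: "sym_kernel gromov_kernel A"
  unfolding sym_kernel_def gromov_kernel_def by (simp add: norm_minus_commute add.commute)

lemma sym_kernel_dist: "sym_kernel (\<lambda>x y. norm (x - y)) A"
  unfolding sym_kernel_def by (simp add: norm_minus_commute)

lemma quad_form_gromov_kernel:
  "quad_form gromov_kernel A c
     = 2 * (\<Sum>x\<in>A. c x) * (\<Sum>x\<in>A. c x * norm x) - quad_form (\<lambda>x y. norm (x - y)) A c"
proof -
  have "quad_form gromov_kernel A c
      = (\<Sum>x\<in>A. \<Sum>y\<in>A. (c x * norm x) * c y + c x * (c y * norm y) - c x * c y * norm (x - y))"
    unfolding quad_form_def gromov_kernel_def by (intro sum.cong refl) (simp add: algebra_simps)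
  also have "\<dots> = (\<Sum>x\<in>A. \<Sum>y\<in>A. (c x * norm x) * c y) + (\<Sum>x\<in>A. \<Sum>y\<in>A. c x * (c y * norm y))
      - quad_form (\<lambda>x y. norm (x - y)) A c"
    unfolding quad_form_def by (simp add: sum.distrib sum_subtractf)
  also have "(\<Sum>x\<in>A. \<Sum>y\<in>A. (c x * norm x) * c y) = (\<Sum>x\<in>A. c x * norm x) * (\<Sum>x\<in>A. c x)"
    by (simp add: sum_product)
  also have "(\<Sum>x\<in>A. \<Sum>y\<in>A. c x * (c y * norm y)) = (\<Sum>x\<in>A. c x) * (\<Sum>x\<in>A. c x * norm x)"
    by (simp add: sum_product)
  finally show ?thesis by simp
qed

text \<open>Adjoining the point \<open>0\<close> with weight \<open>- (\<Sum>x\<in>A. c x)\<close> turns the conditional negative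
  definiteness of the norm into positive semidefiniteness of the Gromov kernel.\<close>

lemma psd_kernel_gromov:
  fixes A :: "'a::real_inner set"
  assumes "finite A"
  shows "psd_kernel gromov_kernel A"
  unfolding psd_kernel_def
proof
  fix c :: "'a \<Rightarrow> real"
  let ?B = "insert 0 A"
  let ?d = "\<lambda>x y. norm (x - y)"
  define c' where "c' = (\<lambda>x. if x \<in> A then c x else 0)"
  define \<mu> where "\<mu> = - (\<Sum>x\<in>A. c x)"
  have fin: "finite ?B" using assms by simp
  have sum_c': "(\<Sum>x\<in>?B. c' x * f x) = (\<Sum>x\<in>A. c x * f x)" for f
  proof -
    have "(\<Sum>x\<in>?B. c' x * f x) = (\<Sum>x\<in>A. c' x * f x)"
      by (rule sum.mono_neutral_right) (use assms in \<open>auto simp: c'_def\<close>)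
    then show ?thesis by (simp add: c'_def)
  qed
  have "(\<Sum>x\<in>?B. c' x + \<mu> * indicator {0} x)
      = (\<Sum>x\<in>?B. c' x * 1) + \<mu> * (\<Sum>x\<in>?B. indicator {0} x * 1)"
    by (simp add: sum.distrib sum_distrib_left)
  also have "\<dots> = 0"
    unfolding sum_c' sum_indicator_singleton_mult[OF fin insertI1] \<mu>_def by simp
  finally have "quad_form ?d ?B (\<lambda>x. c' x + \<mu> * indicator {0} x) \<le> 0"
    by (rule norm_cond_neg_def[OF fin])
  also have "quad_form ?d ?B (\<lambda>x. c' x + \<mu> * indicator {0} x)
      = quad_form ?d ?B c' + 2 * \<mu> * (\<Sum>x\<in>?B. c' x * norm (x - 0)) + \<mu>\<^sup>2 * norm (0 - 0 :: 'a)"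
    by (rule quad_form_add_indicator[OF fin insertI1 sym_kernel_dist])
  also have "quad_form ?d ?B c' = quad_form ?d A c"
    unfolding c'_def by (rule quad_form_zero_extend[OF fin]) auto
  finally have "quad_form ?d A c - 2 * (\<Sum>x\<in>A. c x) * (\<Sum>x\<in>A. c x * norm x) \<le> 0"
    unfolding sum_c' \<mu>_def by simp
  then show "0 \<le> quad_form gromov_kernel A c" unfolding quad_form_gromov_kernel by simp
qed

text \<open>If the form vanishes, \<open>c\<close> lies in the null space of the Gromov kernel on \<open>insert y A\<close>.\<close>

lemma quad_form_dist_eq_0_imp_const:
  fixes A :: "'a::real_inner set"
  assumes "finite A" "(\<Sum>x\<in>A. c x) = 0" "quad_form (\<lambda>x y. norm (x - y)) A c = 0"
  shows "(\<Sum>x\<in>A. c x * norm (x - y)) = (\<Sum>x\<in>A. c x * norm x)"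
proof -
  let ?B = "insert y A"
  define c' where "c' = (\<lambda>x. if x \<in> A then c x else 0)"
  have fin: "finite ?B" using assms(1) by simp
  have "quad_form gromov_kernel ?B c' = quad_form gromov_kernel A c"
    unfolding c'_def by (rule quad_form_zero_extend[OF fin]) auto
  also have "\<dots> = 0" using assms(2,3) by (simp add: quad_form_gromov_kernel)
  finally have "(\<Sum>x\<in>?B. c' x * gromov_kernel x y) = 0"
    by (rule psd_kernel_isotropic_imp_null[OF fin psd_kernel_gromov[OF fin] sym_kernel_gromov insertI1])
  also have "(\<Sum>x\<in>?B. c' x * gromov_kernel x y) = (\<Sum>x\<in>A. c x * gromov_kernel x y)"
  proof -
    have "(\<Sum>x\<in>?B. c' x * gromov_kernel x y) = (\<Sum>x\<in>A. c' x * gromov_kernel x y)"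
      by (rule sum.mono_neutral_right) (use fin in \<open>auto simp: c'_def\<close>)
    then show ?thesis by (simp add: c'_def)
  qed
  also have "\<dots> = (\<Sum>x\<in>A. c x * norm x) + norm y * (\<Sum>x\<in>A. c x) - (\<Sum>x\<in>A. c x * norm (x - y))"
    unfolding gromov_kernel_def by (simp add: algebra_simps sum.distrib sum_subtractf sum_distrib_left)
  finally show ?thesis using assms(2) by simp
qed

lemma norm_second_difference_bounds:
  fixes p u :: "'a::real_inner"
  assumes "p \<noteq> 0" "norm u = 1"
  shows "0 \<le> norm (p - e *\<^sub>R u) + norm (p + e *\<^sub>R u) - 2 * norm p"
    and "norm (p - e *\<^sub>R u) + norm (p + e *\<^sub>R u) - 2 * norm p \<le> e\<^sup>2 / norm p"
proof -
  have "norm ((p - e *\<^sub>R u) + (p + e *\<^sub>R u)) \<le> norm (p - e *\<^sub>R u) + norm (p + e *\<^sub>R u)"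
    by (rule norm_triangle_ineq)
  then show "0 \<le> norm (p - e *\<^sub>R u) + norm (p + e *\<^sub>R u) - 2 * norm p"
    by (simp add: scaleR_2 flip: scaleR_2)
next
  define a where "a = norm (p - e *\<^sub>R u)"
  define b where "b = norm (p + e *\<^sub>R u)"
  define P where "P = norm p"
  have P: "P > 0" using assms unfolding P_def by simp
  have "u \<bullet> u = 1" using assms(2) by (simp add: norm_eq_1)
  then have parallelogram: "a\<^sup>2 + b\<^sup>2 = 2 * P\<^sup>2 + 2 * e\<^sup>2"
    unfolding a_def b_def P_def power2_norm_eq_inner
    by (simp add: inner_diff inner_add inner_commute algebra_simps power2_eq_square)
  have "(a + b)\<^sup>2 \<le> 2 * (a\<^sup>2 + b\<^sup>2)"
    by (smt (verit) sum_squares_bound zero_le_power2 power2_sum power2_diff)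
  also have "\<dots> \<le> (2 * P + e\<^sup>2 / P)\<^sup>2"
  proof -
    have "(2 * P + e\<^sup>2 / P)\<^sup>2 = 4 * P\<^sup>2 + 4 * e\<^sup>2 + (e\<^sup>2 / P)\<^sup>2"
      using P by (simp add: power2_eq_square field_simps)
    then show ?thesis using parallelogram by simp
  qed
  finally have "a + b \<le> 2 * P + e\<^sup>2 / P"
    by (rule power2_le_imp_le) (use P in simp)
  then show "a + b - 2 * P \<le> e\<^sup>2 / P" by simp
qed

text \<open>The second difference of \<open>x \<mapsto> \<parallel>x - x\<^sub>0\<parallel>\<close> at \<open>x\<^sub>0\<close> is of order \<open>e\<close>, but of order \<open>e\<^sup>2\<close>
  at every other point.\<close>

lemma coeff_eq_0_of_second_difference_vanishes:
  fixes x0 u :: "'a::real_inner"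
  assumes "finite A" "x0 \<in> A" "norm u = 1"
    and vanish: "\<And>e. 0 < e \<Longrightarrow>
      (\<Sum>x\<in>A. c x * (norm (x - x0 - e *\<^sub>R u) + norm (x - x0 + e *\<^sub>R u) - 2 * norm (x - x0))) = 0"
  shows "c x0 = 0"
proof (rule ccontr)
  assume "c x0 \<noteq> 0"
  define \<delta> where "\<delta> e x = norm (x - x0 - e *\<^sub>R u) + norm (x - x0 + e *\<^sub>R u) - 2 * norm (x - x0)" for e x
  define M where "M = (\<Sum>x\<in>A - {x0}. \<bar>c x\<bar> / norm (x - x0))"
  define e where "e = \<bar>c x0\<bar> / (M + 1)"
  have "0 \<le> M" unfolding M_def by (intro sum_nonneg) auto
  then have "0 < e" unfolding e_def using \<open>c x0 \<noteq> 0\<close> by simp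
  have "(\<Sum>x\<in>A. c x * \<delta> e x) = 0" unfolding \<delta>_def by (rule vanish[OF \<open>0 < e\<close>])
  moreover have "(\<Sum>x\<in>A. c x * \<delta> e x) = c x0 * \<delta> e x0 + (\<Sum>x\<in>A - {x0}. c x * \<delta> e x)"
    by (rule sum.remove[OF assms(1,2)])
  moreover have "\<delta> e x0 = 2 * e" unfolding \<delta>_def using assms(3) \<open>0 < e\<close> by simp
  ultimately have "(\<Sum>x\<in>A - {x0}. c x * \<delta> e x) = - (c x0 * (2 * e))" by simp
  then have "\<bar>c x0\<bar> * (2 * e) = \<bar>\<Sum>x\<in>A - {x0}. c x * \<delta> e x\<bar>"
    using \<open>0 < e\<close> by (simp add: abs_mult)
  also have "\<dots> \<le> (\<Sum>x\<in>A - {x0}. \<bar>c x\<bar> / norm (x - x0) * e\<^sup>2)"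
  proof (rule order.trans[OF sum_abs sum_mono])
    fix x assume "x \<in> A - {x0}"
    then have "x - x0 \<noteq> 0" by simp
    from norm_second_difference_bounds[OF this assms(3), of e]
    have "0 \<le> \<delta> e x" "\<delta> e x \<le> e\<^sup>2 / norm (x - x0)" unfolding \<delta>_def by (simp_all add: algebra_simps)
    then have "\<bar>c x\<bar> * \<delta> e x \<le> \<bar>c x\<bar> * (e\<^sup>2 / norm (x - x0))"
      by (intro mult_left_mono) simp_all
    then show "\<bar>c x * \<delta> e x\<bar> \<le> \<bar>c x\<bar> / norm (x - x0) * e\<^sup>2"
      using \<open>0 \<le> \<delta> e x\<close> by (simp add: abs_mult)
  qed
  also have "\<dots> = M * e\<^sup>2" unfolding M_def by (simp add: sum_distrib_right)
  finally have "2 * \<bar>c x0\<bar> \<le> M * e" using \<open>0 < e\<close> by (simp add: power2_eq_square)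
  moreover have "M * e < \<bar>c x0\<bar>"
    unfolding e_def using \<open>0 \<le> M\<close> \<open>c x0 \<noteq> 0\<close> by (simp add: field_simps)
  ultimately show False by simp
qed

lemma norm_strict_cond_neg_def:
  fixes A :: "'a::real_inner set"
  assumes "finite A" "(\<Sum>x\<in>A. c x) = 0" "x0 \<in> A" "c x0 \<noteq> 0"
  shows "quad_form (\<lambda>x y. norm (x - y)) A c < 0"
proof (rule ccontr)
  assume "\<not> quad_form (\<lambda>x y. norm (x - y)) A c < 0"
  with norm_cond_neg_def[OF assms(1,2)] have null: "quad_form (\<lambda>x y. norm (x - y)) A c = 0"
    by simp
  have "A \<noteq> {x0}" using assms(2,4) by auto
  then obtain x1 where "x1 \<in> A" "x1 \<noteq> x0" using assms(3) by blast
  define u where "u = sgn (x1 - x0)"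
  have "norm u = 1" using \<open>x1 \<noteq> x0\<close> by (simp add: u_def norm_sgn)
  have "c x0 = 0"
  proof (rule coeff_eq_0_of_second_difference_vanishes[OF assms(1,3) \<open>norm u = 1\<close>])
    fix e :: real
    have shift: "x - x0 - e *\<^sub>R u = x - (x0 + e *\<^sub>R u)" "x - x0 + e *\<^sub>R u = x - (x0 - e *\<^sub>R u)" for x
      by (simp_all add: algebra_simps)
    have "(\<Sum>x\<in>A. c x * (norm (x - x0 - e *\<^sub>R u) + norm (x - x0 + e *\<^sub>R u) - 2 * norm (x - x0)))
        = (\<Sum>x\<in>A. c x * norm (x - (x0 + e *\<^sub>R u))) + (\<Sum>x\<in>A. c x * norm (x - (x0 - e *\<^sub>R u)))
          - 2 * (\<Sum>x\<in>A. c x * norm (x - x0))"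
      unfolding shift
      by (simp add: distrib_left right_diff_distrib sum.distrib sum_subtractf sum_distrib_left
          mult.left_commute)
    then show "(\<Sum>x\<in>A. c x * (norm (x - x0 - e *\<^sub>R u) + norm (x - x0 + e *\<^sub>R u) - 2 * norm (x - x0))) = 0"
      unfolding quad_form_dist_eq_0_imp_const[OF assms(1,2) null] by simp
  qed
  with assms(4) show False by contradiction
qed

lemma pd_kernel_exp_neg_dist:
  fixes A :: "'a::real_inner set"
  assumes "t > 0" "finite A"
  shows "pd_kernel (\<lambda>x y. exp (- t * norm (x - y))) A"
  unfolding pd_kernel_def
proof (intro allI impI)
  fix c :: "'a \<Rightarrow> real"
  assume "\<exists>x\<in>A. c x \<noteq> 0"
  define a where "a x = c x * exp (- t * norm x)" for x
  define K where "K x y = t * gromov_kernel x y" for x y :: 'a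
  have K_form: "quad_form K A d = t * quad_form gromov_kernel A d" for d
    unfolding quad_form_def K_def by (simp add: sum_distrib_left algebra_simps)
  have gromov_nonneg: "0 \<le> quad_form gromov_kernel A d" for d
    using psd_kernel_gromov[OF assms(2)] unfolding psd_kernel_def by simp
  have "psd_kernel K A" unfolding psd_kernel_def K_form using gromov_nonneg assms(1) by simp
  moreover have "sym_kernel K A"
    using sym_kernel_gromov unfolding sym_kernel_def K_def by metis
  moreover have "exp (- t * norm (x - y)) = exp (- t * norm x) * exp (- t * norm y) * exp (K x y)" for x y
    unfolding K_def gromov_kernel_def by (simp add: algebra_simps flip: exp_add)
  then have "quad_form (\<lambda>x y. exp (- t * norm (x - y))) A c = quad_form (\<lambda>x y. exp (K x y)) A a"
    unfolding quad_form_def a_def by (intro sum.cong refl) (simp add: algebra_simps)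
  ultimately have ge: "(\<Sum>x\<in>A. a x)\<^sup>2 + t * quad_form gromov_kernel A a
      \<le> quad_form (\<lambda>x y. exp (- t * norm (x - y))) A c"
    using quad_form_exp_kernel_ge[OF assms(2)] K_form by metis
  show "0 < quad_form (\<lambda>x y. exp (- t * norm (x - y))) A c"
  proof (cases "(\<Sum>x\<in>A. a x) = 0")
    case False
    then show ?thesis
      using ge gromov_nonneg[of a] assms(1) by (smt (verit) mult_nonneg_nonneg zero_less_power2)
  next
    case True
    obtain x0 where "x0 \<in> A" "a x0 \<noteq> 0" using \<open>\<exists>x\<in>A. c x \<noteq> 0\<close> unfolding a_def by auto
    then have "quad_form (\<lambda>x y. norm (x - y)) A a < 0"
      by (rule norm_strict_cond_neg_def[OF assms(2) True])
    then have "0 < quad_form gromov_kernel A a" using True by (simp add: quad_form_gromov_kernel)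
    then have "0 < t * quad_form gromov_kernel A a" using assms(1) by simp
    then show ?thesis using ge True by simp
  qed
qed

section \<open>Weightings\<close>

lemma pd_kernel_zeta:
  assumes "t > 0" "finite A"
  shows "pd_kernel (zeta t) A"
  using pd_kernel_exp_neg_dist[OF assms] unfolding zeta_def[abs_def] .

lemma weighting_eq_The:
  "weighting t A = (THE w. kernel_solution (zeta t) A (\<lambda>_. 1) w)"
  unfolding weighting_def kernel_solution_def ..

lemma ex1_weighting_solution:
  assumes "t > 0" "finite A"
  shows "\<exists>!w. kernel_solution (zeta t) A (\<lambda>_. 1) w"
proof (rule pd_kernel_ex1_solution[OF assms(2) _ pd_kernel_zeta[OF assms]])
  show "sym_kernel (zeta t) A" unfolding sym_kernel_def zeta_def by (simp add: norm_minus_commute)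
qed

lemma weighting_solution:
  assumes "t > 0" "finite A"
  shows "kernel_solution (zeta t) A (\<lambda>_. 1) (weighting t A)"
  unfolding weighting_eq_The by (rule theI'[OF ex1_weighting_solution[OF assms]])

lemma weighting_eqI:
  assumes "t > 0" "finite A" "kernel_solution (zeta t) A (\<lambda>_. 1) w"
  shows "weighting t A = w"
  unfolding weighting_eq_The
  by (rule the1_equality[OF ex1_weighting_solution[OF assms(1,2)]]) (rule assms(3))

lemma weighting_wsupp:
  assumes "t > 0" "finite A"
  shows "weighting t (wsupp t A) = weighting t A"
proof (rule weighting_eqI)
  let ?S = "wsupp t A"
  have "?S \<subseteq> A" unfolding wsupp_def by auto
  then show "finite ?S" using assms(2) by (rule finite_subset)
  have w: "kernel_solution (zeta t) A (\<lambda>_. 1) (weighting t A)" by (rule weighting_solution[OF assms])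
  have outside: "weighting t A x = 0" if "x \<notin> ?S" for x
    using w that unfolding kernel_solution_def wsupp_def by auto
  show "kernel_solution (zeta t) ?S (\<lambda>_. 1) (weighting t A)"
    unfolding kernel_solution_def
  proof (intro conjI ballI allI impI)
    fix x assume "x \<in> ?S"
    have "(\<Sum>y\<in>?S. zeta t x y * weighting t A y) = (\<Sum>y\<in>A. zeta t x y * weighting t A y)"
      by (rule sum.mono_neutral_left) (use assms(2) \<open>?S \<subseteq> A\<close> outside in auto)
    also have "\<dots> = 1" using w \<open>x \<in> ?S\<close> \<open>?S \<subseteq> A\<close> unfolding kernel_solution_def by auto
    finally show "(\<Sum>y\<in>?S. zeta t x y * weighting t A y) = 1" .
  qed (rule outside)
qed (rule assms(1))

theorem lemmaB3:
  fixes X Y :: "(real^'n) set" and t :: real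
  assumes "t > 0" and "finite X" and "finite Y"
  shows "magnitude_equivalent t X Y \<longleftrightarrow>
           ((\<forall>z\<in>X \<inter> Y. weighting t X z = weighting t Y z) \<and>
            (\<forall>z\<in>X - (X \<inter> Y). weighting t X z = 0) \<and>
            (\<forall>z\<in>Y - (X \<inter> Y). weighting t Y z = 0))"
proof
  assume "magnitude_equivalent t X Y"
  then have "weighting t X = weighting t Y"
    using weighting_wsupp[OF assms(1,2)] weighting_wsupp[OF assms(1,3)]
    unfolding magnitude_equivalent_def by metis
  moreover have "weighting t X z = 0" if "z \<notin> X" for z
    using weighting_solution[OF assms(1,2)] that unfolding kernel_solution_def by blast
  moreover have "weighting t Y z = 0" if "z \<notin> Y" for z
    using weighting_solution[OF assms(1,3)] that unfolding kernel_solution_def by blast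
  ultimately show "(\<forall>z\<in>X \<inter> Y. weighting t X z = weighting t Y z) \<and>
      (\<forall>z\<in>X - (X \<inter> Y). weighting t X z = 0) \<and> (\<forall>z\<in>Y - (X \<inter> Y). weighting t Y z = 0)"
    by auto
next
  assume "(\<forall>z\<in>X \<inter> Y. weighting t X z = weighting t Y z) \<and>
      (\<forall>z\<in>X - (X \<inter> Y). weighting t X z = 0) \<and> (\<forall>z\<in>Y - (X \<inter> Y). weighting t Y z = 0)"
  then show "magnitude_equivalent t X Y"
    unfolding magnitude_equivalent_def wsupp_def by auto
qed

end
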